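(* Let $T$ be a complete theory with monster model $\mathcal{U}$, $A\subseteq\mathcal{U}$ small, and $\mu\in\mathfrak{M}_x(\mathcal{U})$, $\nu\in\mathfrak{M}_y(\mathcal{U})$, $\eta\in\mathfrak{M}_z(\mathcal{U})$ (with $x,y,z$ pairwise disjoint). If $\mu\geq_{\mathbb{E},A}\nu$ and $\nu\geq_{\mathbb{E},A}\eta$, then $\mu\geq_{\mathbb{E},A}\eta$.
   Context: For $B\subseteq\mathcal{U}$, $\mathcal{L}_x(B)$ is the Boolean algebra of formulas in $x$ with parameters from $B$ modulo $T$, embedded in $\mathcal{L}_{xy}(B)$ via $\varphi(x)\mapsto\varphi(x)\wedge y=y$; $\mathfrak{M}_x(B)$ is the set of finitely additive probability measures on $\mathcal{L}_x(B)$. For $\omega\in\mathfrak{M}_{xy}(B)$, $\pi_x(\omega)(\varphi(x))=\omega(\varphi(x)\wedge y=y)$ (similarly $\pi_y$); $\omega|_C$ is restriction. For $\mu\in\mathfrak{M}_x(\mathcal{U})$, $\nu\in\mathfrak{M}_y(\mathcal{U})$: $\mu\geq_{\mathbb{E},A}\nu$ means there is $\lambda\in\mathfrak{M}_{xy}(A)$ with $\pi_x(\lambda)=\mu|_A$ such that every $\omega\in\mathfrak{M}_{xy}(\mathcal{U})$ with $\omega|_A=\lambda$ and $\pi_x(\omega)=\mu$ satisfies $\pi_y(\omega)=\nu$ (analogously for other pairs of variable tuples). *)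

theory Defs
  imports Complex_Main "HOL-Library.FuncSet"
begin

unbundle cardinal_syntax

text \<open>The monster model has universe UNIV :: 'u set and is given
by interpretations F and R.\<close>

datatype ('f,'u) trm = Var nat | Par 'u | Fn 'f "('f,'u) trm list"

datatype ('f,'r,'u) fml =
    Eq "('f,'u) trm" "('f,'u) trm"
  | Rl 'r "('f,'u) trm list"
  | Neg "('f,'r,'u) fml"
  | Conj "('f,'r,'u) fml" "('f,'r,'u) fml"
  | Ex nat "('f,'r,'u) fml"

fun evalt :: "('f \<Rightarrow> 'u list \<Rightarrow> 'u) \<Rightarrow> (nat \<Rightarrow> 'u) \<Rightarrow> ('f,'u) trm \<Rightarrow> 'u" where
  "evalt F a (Var n) = a n"
| "evalt F a (Par u) = u"
| "evalt F a (Fn f ts) = F f (map (evalt F a) ts)"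

fun sat :: "('f \<Rightarrow> 'u list \<Rightarrow> 'u) \<Rightarrow> ('r \<Rightarrow> 'u list \<Rightarrow> bool) \<Rightarrow> (nat \<Rightarrow> 'u)
             \<Rightarrow> ('f,'r,'u) fml \<Rightarrow> bool" where
  "sat F R a (Eq s t) = (evalt F a s = evalt F a t)"
| "sat F R a (Rl r ts) = R r (map (evalt F a) ts)"
| "sat F R a (Neg \<phi>) = (\<not> sat F R a \<phi>)"
| "sat F R a (Conj \<phi> \<psi>) = (sat F R a \<phi> \<and> sat F R a \<psi>)"
| "sat F R a (Ex n \<phi>) = (\<exists>u. sat F R (a(n := u)) \<phi>)"

fun fvt :: "('f,'u) trm \<Rightarrow> nat set" where
  "fvt (Var n) = {n}"
| "fvt (Par u) = {}"
| "fvt (Fn f ts) = (\<Union>t\<in>set ts. fvt t)"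

fun fv :: "('f,'r,'u) fml \<Rightarrow> nat set" where
  "fv (Eq s t) = fvt s \<union> fvt t"
| "fv (Rl r ts) = (\<Union>t\<in>set ts. fvt t)"
| "fv (Neg \<phi>) = fv \<phi>"
| "fv (Conj \<phi> \<psi>) = fv \<phi> \<union> fv \<psi>"
| "fv (Ex n \<phi>) = fv \<phi> - {n}"

fun part :: "('f,'u) trm \<Rightarrow> 'u set" where
  "part (Var n) = {}"
| "part (Par u) = {u}"
| "part (Fn f ts) = (\<Union>t\<in>set ts. part t)"

fun params :: "('f,'r,'u) fml \<Rightarrow> 'u set" where
  "params (Eq s t) = part s \<union> part t"
| "params (Rl r ts) = (\<Union>t\<in>set ts. part t)"
| "params (Neg \<phi>) = params \<phi>"
| "params (Conj \<phi> \<psi>) = params \<phi> \<union> params \<psi>"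
| "params (Ex n \<phi>) = params \<phi>"

fun mapt :: "('u \<Rightarrow> 'u) \<Rightarrow> ('f,'u) trm \<Rightarrow> ('f,'u) trm" where
  "mapt g (Var n) = Var n"
| "mapt g (Par u) = Par (g u)"
| "mapt g (Fn f ts) = Fn f (map (mapt g) ts)"

fun mapp :: "('u \<Rightarrow> 'u) \<Rightarrow> ('f,'r,'u) fml \<Rightarrow> ('f,'r,'u) fml" where
  "mapp g (Eq s t) = Eq (mapt g s) (mapt g t)"
| "mapp g (Rl r ts) = Rl r (map (mapt g) ts)"
| "mapp g (Neg \<phi>) = Neg (mapp g \<phi>)"
| "mapp g (Conj \<phi> \<psi>) = Conj (mapp g \<phi>) (mapp g \<psi>)"
| "mapp g (Ex n \<phi>) = Ex n (mapp g \<phi>)"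

definition saturated ::
  "('f \<Rightarrow> 'u list \<Rightarrow> 'u) \<Rightarrow> ('r \<Rightarrow> 'u list \<Rightarrow> bool) \<Rightarrow> 'k rel \<Rightarrow> bool" where
  "saturated F R \<kappa> \<longleftrightarrow>
     (\<forall>(B::'u set) (X::nat set) (p::('f,'r,'u) fml set).
        |B| <o \<kappa> \<and> finite X \<and> (\<forall>\<phi>\<in>p. params \<phi> \<subseteq> B \<and> fv \<phi> \<subseteq> X)
        \<and> (\<forall>q\<subseteq>p. finite q \<longrightarrow> (\<exists>a. \<forall>\<phi>\<in>q. sat F R a \<phi>))
        \<longrightarrow> (\<exists>a. \<forall>\<phi>\<in>p. sat F R a \<phi>))"

definition automorphism ::
  "('f \<Rightarrow> 'u list \<Rightarrow> 'u) \<Rightarrow> ('r \<Rightarrow> 'u list \<Rightarrow> bool) \<Rightarrow> ('u \<Rightarrow> 'u) \<Rightarrow> bool" where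
  "automorphism F R \<sigma> \<longleftrightarrow> bij \<sigma>
     \<and> (\<forall>f us. \<sigma> (F f us) = F f (map \<sigma> us))
     \<and> (\<forall>r us. R r (map \<sigma> us) = R r us)"

definition elementary_on ::
  "('f \<Rightarrow> 'u list \<Rightarrow> 'u) \<Rightarrow> ('r \<Rightarrow> 'u list \<Rightarrow> bool) \<Rightarrow> 'u set \<Rightarrow> ('u \<Rightarrow> 'u) \<Rightarrow> bool" where
  "elementary_on F R B g \<longleftrightarrow>
     (\<forall>(\<phi>::('f,'r,'u) fml) a. params \<phi> \<subseteq> B \<and> fv \<phi> = {} \<longrightarrow>
         (sat F R a \<phi> \<longleftrightarrow> sat F R a (mapp g \<phi>)))"

definition homogeneous ::
  "('f \<Rightarrow> 'u list \<Rightarrow> 'u) \<Rightarrow> ('r \<Rightarrow> 'u list \<Rightarrow> bool) \<Rightarrow> 'k rel \<Rightarrow> bool" where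
  "homogeneous F R \<kappa> \<longleftrightarrow>
     (\<forall>(B::'u set) g. |B| <o \<kappa> \<and> elementary_on F R B g \<longrightarrow>
        (\<exists>\<sigma>. automorphism F R \<sigma> \<and> (\<forall>b\<in>B. \<sigma> b = g b)))"

text \<open>The monster model: kappa is an infinite cardinal larger than the size of the
language (plus aleph_0), and the structure is kappa-saturated and strongly
kappa-homogeneous.  "Small" means of cardinality < kappa.\<close>
definition monster ::
  "('f \<Rightarrow> 'u list \<Rightarrow> 'u) \<Rightarrow> ('r \<Rightarrow> 'u list \<Rightarrow> bool) \<Rightarrow> 'k rel \<Rightarrow> bool" where
  "monster F R \<kappa> \<longleftrightarrow> Card_order \<kappa>
     \<and> |UNIV :: ('f + 'r + nat) set| <o \<kappa>
     \<and> saturated F R \<kappa> \<and> homogeneous F R \<kappa>"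

text \<open>L_X(B): formulas with free variables among the tuple X and parameters from B,
modulo T = Th(monster), represented by the subsets of U^X they define.
Elements of U^X are the functions in X ->E UNIV.\<close>
definition Lalg ::
  "('f \<Rightarrow> 'u list \<Rightarrow> 'u) \<Rightarrow> ('r \<Rightarrow> 'u list \<Rightarrow> bool) \<Rightarrow> nat set \<Rightarrow> 'u set
     \<Rightarrow> (nat \<Rightarrow> 'u) set set" where
  "Lalg F R X B = {{a \<in> X \<rightarrow>\<^sub>E UNIV. sat F R a \<phi>} | \<phi>::('f,'r,'u) fml.
                      params \<phi> \<subseteq> B \<and> fv \<phi> \<subseteq> X}"

text \<open>Finitely additive probability measures on L_X(B) (set to 0 outside L_X(B)).\<close>
definition keisler ::
  "('f \<Rightarrow> 'u list \<Rightarrow> 'u) \<Rightarrow> ('r \<Rightarrow> 'u list \<Rightarrow> bool) \<Rightarrow> nat set \<Rightarrow> 'u set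
     \<Rightarrow> ((nat \<Rightarrow> 'u) set \<Rightarrow> real) \<Rightarrow> bool" where
  "keisler F R X B m \<longleftrightarrow>
     (\<forall>D. D \<notin> Lalg F R X B \<longrightarrow> m D = 0)
     \<and> (\<forall>D\<in>Lalg F R X B. 0 \<le> m D)
     \<and> m (X \<rightarrow>\<^sub>E UNIV) = 1
     \<and> (\<forall>D\<in>Lalg F R X B. \<forall>E\<in>Lalg F R X B. D \<inter> E = {} \<longrightarrow> m (D \<union> E) = m D + m E)"

definition restr ::
  "('f \<Rightarrow> 'u list \<Rightarrow> 'u) \<Rightarrow> ('r \<Rightarrow> 'u list \<Rightarrow> bool) \<Rightarrow> nat set \<Rightarrow> 'u set
     \<Rightarrow> ((nat \<Rightarrow> 'u) set \<Rightarrow> real) \<Rightarrow> ((nat \<Rightarrow> 'u) set \<Rightarrow> real)" where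
  "restr F R X C m = (\<lambda>D. if D \<in> Lalg F R X C then m D else 0)"

text \<open>Pushforward to a subtuple W of V: phi(w) is identified with phi(w) and v=v,
i.e. with the cylinder over the set it defines.\<close>
definition proj ::
  "('f \<Rightarrow> 'u list \<Rightarrow> 'u) \<Rightarrow> ('r \<Rightarrow> 'u list \<Rightarrow> bool) \<Rightarrow> nat set \<Rightarrow> nat set \<Rightarrow> 'u set
     \<Rightarrow> ((nat \<Rightarrow> 'u) set \<Rightarrow> real) \<Rightarrow> ((nat \<Rightarrow> 'u) set \<Rightarrow> real)" where
  "proj F R V W B m = (\<lambda>D. if D \<in> Lalg F R W B
                               then m {a \<in> V \<rightarrow>\<^sub>E UNIV. restrict a W \<in> D} else 0)"

definition geE ::
  "('f \<Rightarrow> 'u list \<Rightarrow> 'u) \<Rightarrow> ('r \<Rightarrow> 'u list \<Rightarrow> bool) \<Rightarrow> 'u set \<Rightarrow> nat set \<Rightarrow> nat set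
     \<Rightarrow> ((nat \<Rightarrow> 'u) set \<Rightarrow> real) \<Rightarrow> ((nat \<Rightarrow> 'u) set \<Rightarrow> real) \<Rightarrow> bool" where
  "geE F R A X Y \<mu> \<nu> \<longleftrightarrow>
     (\<exists>lam. keisler F R (X \<union> Y) A lam
        \<and> proj F R (X \<union> Y) X A lam = restr F R X A \<mu>
        \<and> (\<forall>\<omega>. keisler F R (X \<union> Y) UNIV \<omega>
               \<and> restr F R (X \<union> Y) A \<omega> = lam
               \<and> proj F R (X \<union> Y) X UNIV \<omega> = \<mu>
               \<longrightarrow> proj F R (X \<union> Y) Y UNIV \<omega> = \<nu>))"

end

theory Submission
  imports Defs "HOL-Analysis.Analysis"
begin

text \<open>
  Let \<open>\<lambda>\<^sub>1\<close> witness \<open>geE A X Y \<mu> \<nu>\<close> and \<open>\<lambda>\<^sub>2\<close> witness \<open>geE A Y Z \<nu> \<eta>\<close>. Everything rests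
  on amalgamation: Keisler measures on the tuples \<open>W\<close> and \<open>W'\<close> that agree on \<open>W \<inter> W'\<close> have
  a common extension to \<open>W \<union> W'\<close>. For finitely many definable sets one couples the atoms of
  the two sides independently over the type of the common variables and puts the mass on
  points; compactness of \<open>[0, 1]\<^sup>L\<close> (Tychonoff) then yields a Keisler measure.
  Amalgamating \<open>\<mu>\<close> with \<open>\<lambda>\<^sub>1\<close> and using that \<open>\<lambda>\<^sub>1\<close> is a witness shows that the
  \<open>Y\<close>-marginal of \<open>\<lambda>\<^sub>1\<close> is \<open>\<nu>\<close> restricted to \<open>A\<close>, as is that of \<open>\<lambda>\<^sub>2\<close>. So \<open>\<lambda>\<^sub>1\<close> and \<open>\<lambda>\<^sub>2\<close>
  amalgamate to some \<open>\<Lambda>\<close> on \<open>X \<union> Y \<union> Z\<close>, and the \<open>X \<union> Z\<close>-marginal of \<open>\<Lambda>\<close> is a witness for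
  \<open>geE A X Z \<mu> \<eta>\<close>: any admissible \<open>\<omega>\<close> amalgamates with \<open>\<Lambda>\<close> to some \<open>\<Omega>\<close>; the choice of
  \<open>\<lambda>\<^sub>1\<close> forces the \<open>Y\<close>-marginal of \<open>\<Omega>\<close> to be \<open>\<nu>\<close>, and then the choice of \<open>\<lambda>\<^sub>2\<close> forces
  its \<open>Z\<close>-marginal to be \<open>\<eta>\<close>.
\<close>

definition cylinder :: "nat set \<Rightarrow> nat set \<Rightarrow> (nat \<Rightarrow> 'u) set \<Rightarrow> (nat \<Rightarrow> 'u) set" where
  "cylinder V W D = {a \<in> V \<rightarrow>\<^sub>E UNIV. restrict a W \<in> D}"

lemma mem_cylinder: "a \<in> cylinder V W D \<longleftrightarrow> a \<in> V \<rightarrow>\<^sub>E UNIV \<and> restrict a W \<in> D"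
  unfolding cylinder_def by simp

lemma cylinder_cylinder: "S \<subseteq> W \<Longrightarrow> cylinder V W (cylinder W S D) = cylinder V S D"
  unfolding cylinder_def by (auto simp: Int_absorb1)

lemma cylinder_self: "D \<subseteq> V \<rightarrow>\<^sub>E UNIV \<Longrightarrow> cylinder V V D = D"
  unfolding cylinder_def by (auto simp: restrict_PiE_iff)

lemma cylinder_top: "W \<subseteq> V \<Longrightarrow> cylinder V W (W \<rightarrow>\<^sub>E UNIV) = V \<rightarrow>\<^sub>E UNIV"
  unfolding cylinder_def by auto

lemma cylinder_Int: "cylinder V W D \<inter> cylinder V W E = cylinder V W (D \<inter> E)"
  unfolding cylinder_def by blast

lemma cylinder_Un: "cylinder V W D \<union> cylinder V W E = cylinder V W (D \<union> E)"
  unfolding cylinder_def by blast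

lemma cylinder_UN: "(\<Union>i\<in>I. cylinder V W (D i)) = cylinder V W (\<Union>i\<in>I. D i)"
  unfolding cylinder_def by blast

lemma cylinder_empty [simp]: "cylinder V W {} = {}"
  unfolding cylinder_def by blast

lemma restrict_merge:
  assumes "a \<in> W \<rightarrow>\<^sub>E UNIV" "b \<in> W' \<rightarrow>\<^sub>E UNIV" "restrict a (W \<inter> W') = restrict b (W \<inter> W')"
  obtains p where "p \<in> (W \<union> W') \<rightarrow>\<^sub>E UNIV" "restrict p W = a" "restrict p W' = b"
proof
  let ?p = "restrict (\<lambda>n. if n \<in> W then a n else b n) (W \<union> W')"
  show "?p \<in> (W \<union> W') \<rightarrow>\<^sub>E UNIV" by simp
  show "restrict ?p W = a"
    using assms(1) by (auto simp: fun_eq_iff PiE_def extensional_def)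
  show "restrict ?p W' = b"
  proof
    fix n
    have "n \<in> W \<Longrightarrow> n \<in> W' \<Longrightarrow> a n = b n"
      using fun_cong[OF assms(3), of n] by simp
    then show "restrict ?p W' n = b n"
      using assms(2) by (auto simp: PiE_def extensional_def)
  qed
qed

definition atom :: "'a set \<Rightarrow> 'a set set \<Rightarrow> 'a set set \<Rightarrow> 'a set" where
  "atom \<Omega> Fs T = {a \<in> \<Omega>. \<forall>D\<in>Fs. a \<in> D \<longleftrightarrow> D \<in> T}"

lemma mem_atom: "a \<in> atom \<Omega> Fs T \<longleftrightarrow> a \<in> \<Omega> \<and> (\<forall>D\<in>Fs. a \<in> D \<longleftrightarrow> D \<in> T)"
  unfolding atom_def by simp

lemma atom_subset: "atom \<Omega> Fs T \<subseteq> \<Omega>"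
  unfolding atom_def by blast

lemma disjoint_family_on_atom: "disjoint_family_on (atom \<Omega> Fs) (Pow Fs)"
  unfolding disjoint_family_on_def
proof (intro ballI impI, rule ccontr)
  fix T T' assume "T \<in> Pow Fs" "T' \<in> Pow Fs" "T \<noteq> T'" "atom \<Omega> Fs T \<inter> atom \<Omega> Fs T' \<noteq> {}"
  then obtain a where "\<forall>D\<in>Fs. a \<in> D \<longleftrightarrow> D \<in> T" "\<forall>D\<in>Fs. a \<in> D \<longleftrightarrow> D \<in> T'"
    unfolding atom_def by blast
  with \<open>T \<in> Pow Fs\<close> \<open>T' \<in> Pow Fs\<close> have "T = T'"
    by blast
  with \<open>T \<noteq> T'\<close> show False ..
qed

lemma UN_atom: "(\<Union>T\<in>Pow Fs. atom \<Omega> Fs T) = \<Omega>"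
proof
  show "(\<Union>T\<in>Pow Fs. atom \<Omega> Fs T) \<subseteq> \<Omega>"
    unfolding atom_def by (rule UN_least) (rule Collect_subset)
  show "\<Omega> \<subseteq> (\<Union>T\<in>Pow Fs. atom \<Omega> Fs T)"
  proof
    fix a assume "a \<in> \<Omega>"
    then have "a \<in> atom \<Omega> Fs {D \<in> Fs. a \<in> D}"
      by (simp add: mem_atom)
    moreover have "{D \<in> Fs. a \<in> D} \<in> Pow Fs"
      by simp
    ultimately show "a \<in> (\<Union>T\<in>Pow Fs. atom \<Omega> Fs T)"
      by (rule UN_I[rotated])
  qed
qed

lemma Int_atom:
  assumes "D \<in> Fs"
  shows "D \<inter> atom \<Omega> Fs T = (if D \<in> T then atom \<Omega> Fs T else {})"
proof -
  have "a \<in> D \<longleftrightarrow> D \<in> T" if "a \<in> atom \<Omega> Fs T" for a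
    using that assms by (simp add: mem_atom)
  then show ?thesis by auto
qed

lemma atom_insert: "atom \<Omega> (insert D Fs) T = atom \<Omega> Fs T \<inter> (if D \<in> T then D else \<Omega> - D)"
  by (rule set_eqI) (simp add: mem_atom; blast)

lemma sum_mult_div_eq:
  fixes x c :: "'a :: field"
  assumes "(\<Sum>j\<in>J. y j) = c" "c = 0 \<Longrightarrow> x = 0"
  shows "(\<Sum>j\<in>J. x * y j / c) = x"
  using assms by (cases "c = 0") (simp_all add: sum_distrib_left[symmetric] sum_divide_distrib[symmetric])

lemma finite_subset_image_Un:
  assumes "finite K" "K \<subseteq> f ` A \<union> g ` B"
  obtains A' B' where "finite A'" "A' \<subseteq> A" "finite B'" "B' \<subseteq> B" "K \<subseteq> f ` A' \<union> g ` B'"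
proof -
  obtain A' where A': "A' \<subseteq> A" "finite A'" "K \<inter> f ` A = f ` A'"
    using finite_subset_image[of "K \<inter> f ` A" f A] assms(1) by blast
  obtain B' where B': "B' \<subseteq> B" "finite B'" "K \<inter> g ` B = g ` B'"
    using finite_subset_image[of "K \<inter> g ` B" g B] assms(1) by blast
  have "K \<subseteq> (K \<inter> f ` A) \<union> (K \<inter> g ` B)"
    using assms(2) by blast
  then have "K \<subseteq> f ` A' \<union> g ` B'"
    by (simp only: A'(3) B'(3))
  then show thesis
    by (rule that[OF A'(2,1) B'(2,1)])
qed

section \<open>Compactness of finitely additive set functions\<close>

definition additive_on :: "'a set set \<Rightarrow> ('a set \<Rightarrow> real) \<Rightarrow> bool" where
  "additive_on L m \<longleftrightarrow> (\<forall>D\<in>L. \<forall>E\<in>L. D \<inter> E = {} \<longrightarrow> D \<union> E \<in> L \<longrightarrow> m (D \<union> E) = m D + m E)"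

definition unit_cube :: "'a set set \<Rightarrow> ('a set \<Rightarrow> real) topology" where
  "unit_cube L = product_topology (\<lambda>_. top_of_set {0..1}) L"

lemma topspace_unit_cube: "topspace (unit_cube L) = L \<rightarrow>\<^sub>E {0..1}"
  by (simp add: unit_cube_def)

lemma compact_space_unit_cube: "compact_space (unit_cube L)"
  by (simp add: unit_cube_def compact_space_product_topology compact_space_subtopology)

lemma continuous_map_unit_cube_coordinate:
  "D \<in> L \<Longrightarrow> continuous_map (unit_cube L) euclideanreal (\<lambda>m. m D)"
  using continuous_map_product_projection[of D L "\<lambda>_. top_of_set {0..1::real}"]
  by (simp add: unit_cube_def continuous_map_in_subtopology)

lemma closedin_unit_cube_value:
  "D \<in> L \<Longrightarrow> closedin (unit_cube L) {m \<in> topspace (unit_cube L). m D = r}"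
  using closedin_continuous_map_preimage[OF continuous_map_unit_cube_coordinate, of D L "{r}"]
  by simp

lemma closedin_unit_cube_additive:
  assumes "D \<in> L" "E \<in> L" "D \<union> E \<in> L"
  shows "closedin (unit_cube L) {m \<in> topspace (unit_cube L). m (D \<union> E) = m D + m E}"
proof -
  have "continuous_map (unit_cube L) euclideanreal (\<lambda>m. m (D \<union> E) - (m D + m E))"
    using assms by (intro continuous_map_diff continuous_map_add continuous_map_unit_cube_coordinate)
  from closedin_continuous_map_preimage[OF this, of "{0}"] show ?thesis
    by simp
qed

lemma closedin_unit_cube_additive_on:
  "closedin (unit_cube L) {m \<in> topspace (unit_cube L). additive_on L m}"
proof -
  let ?X = "unit_cube L"
  define pairs where "pairs = {p. fst p \<in> L \<and> snd p \<in> L \<and> fst p \<union> snd p \<in> L \<and> fst p \<inter> snd p = {}}"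
  define additive_at where
    "additive_at p = {m \<in> topspace ?X. m (fst p \<union> snd p) = m (fst p) + m (snd p)}" for p
  have "closedin ?X (\<Inter>(insert (topspace ?X) (additive_at ` pairs)))"
    by (intro closedin_Inter) (auto simp: additive_at_def pairs_def intro: closedin_unit_cube_additive)
  moreover have "\<Inter>(insert (topspace ?X) (additive_at ` pairs)) = {m \<in> topspace ?X. additive_on L m}"
    by (auto simp: additive_at_def pairs_def additive_on_def)
  ultimately show ?thesis
    by simp
qed

lemma finitely_additive_compactness:
  fixes L :: "'a set set" and C :: "('a set \<times> real) set"
  assumes C_subset: "fst ` C \<subseteq> L"
    and finitely_satisfiable: "\<And>K. finite K \<Longrightarrow> K \<subseteq> C \<Longrightarrow>
      \<exists>m. additive_on L m \<and> m ` L \<subseteq> {0..1} \<and> (\<forall>(D, r)\<in>K. m D = r)"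
  obtains m where "additive_on L m" "m ` L \<subseteq> {0..1}" "\<forall>(D, r)\<in>C. m D = r"
proof -
  let ?X = "unit_cube L"
  define A where "A = {m \<in> topspace ?X. additive_on L m}"
  define satisfies where "satisfies c = {m \<in> topspace ?X. m (fst c) = snd c}" for c
  have "compactin ?X A"
    unfolding A_def
    by (intro closedin_compact_space compact_space_unit_cube closedin_unit_cube_additive_on)
  then have fip: "\<forall>\<U>. (\<forall>U\<in>\<U>. closedin ?X U) \<and> (\<forall>\<F>. finite \<F> \<and> \<F> \<subseteq> \<U> \<longrightarrow> A \<inter> \<Inter>\<F> \<noteq> {})
      \<longrightarrow> A \<inter> \<Inter>\<U> \<noteq> {}"
    unfolding compactin_fip by (elim conjE)
  have "\<forall>U\<in>satisfies ` C. closedin ?X U"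
    using C_subset by (auto simp: satisfies_def intro: closedin_unit_cube_value)
  moreover have "\<forall>\<F>. finite \<F> \<and> \<F> \<subseteq> satisfies ` C \<longrightarrow> A \<inter> \<Inter>\<F> \<noteq> {}"
  proof (intro allI impI, elim conjE)
    fix \<F> assume "finite \<F>" "\<F> \<subseteq> satisfies ` C"
    then obtain K where K: "K \<subseteq> C" "finite K" "\<F> = satisfies ` K"
      by (blast dest: finite_subset_image)
    then obtain m where m: "additive_on L m" "m ` L \<subseteq> {0..1}" "\<forall>(D, r)\<in>K. m D = r"
      using finitely_satisfiable by blast
    have "restrict m L \<in> A"
      using m(1,2) by (auto simp: A_def topspace_unit_cube additive_on_def)
    moreover have "restrict m L \<in> satisfies c" if "c \<in> K" for c
      using that m(3) K(1) C_subset \<open>restrict m L \<in> A\<close> by (auto simp: satisfies_def A_def)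
    ultimately show "A \<inter> \<Inter>\<F> \<noteq> {}"
      using K(3) by blast
  qed
  ultimately obtain m where "m \<in> A" "\<forall>c\<in>C. m \<in> satisfies c"
    using fip[rule_format, of "satisfies ` C"] by blast
  then show thesis
    by (intro that) (auto simp: A_def satisfies_def topspace_unit_cube)
qed

section \<open>Definable sets\<close>

context
  fixes F :: "'f \<Rightarrow> 'u list \<Rightarrow> 'u" and R :: "'r \<Rightarrow> 'u list \<Rightarrow> bool"
begin

lemma evalt_cong: "(\<forall>n\<in>fvt t. a n = b n) \<Longrightarrow> evalt F a t = evalt F b t"
proof (induction t)
  case (Fn f ts)
  then have "map (evalt F a) ts = map (evalt F b) ts"
    by (auto simp: map_eq_conv)
  then show ?case by (metis evalt.simps(3))
qed auto

lemma sat_cong: "(\<forall>n\<in>fv \<phi>. a n = b n) \<Longrightarrow> sat F R a \<phi> = sat F R b \<phi>"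
proof (induction \<phi> arbitrary: a b)
  case (Eq s t)
  then show ?case by (simp add: evalt_cong[of s a b] evalt_cong[of t a b])
next
  case (Rl r ts)
  then have "map (evalt F a) ts = map (evalt F b) ts"
    by (auto simp: map_eq_conv intro!: evalt_cong)
  then show ?case by (metis sat.simps(2))
next
  case (Conj \<phi> \<psi>)
  then have "sat F R a \<phi> = sat F R b \<phi>" and "sat F R a \<psi> = sat F R b \<psi>"
    by (intro Conj.IH; auto)+
  then show ?case by simp
next
  case (Ex n \<phi>)
  then have "sat F R (a(n := u)) \<phi> = sat F R (b(n := u)) \<phi>" for u
    by (intro Ex.IH) auto
  then show ?case by simp
qed auto

lemma sat_foldr_Ex:
  "sat F R a (foldr Ex ns \<phi>) \<longleftrightarrow> (\<exists>g. sat F R (\<lambda>n. if n \<in> set ns then g n else a n) \<phi>)"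
proof (induction ns arbitrary: a)
  case (Cons n ns)
  have "sat F R a (foldr Ex (n # ns) \<phi>) \<longleftrightarrow>
        (\<exists>u g. sat F R (\<lambda>m. if m \<in> set ns then g m else (a(n := u)) m) \<phi>)"
    using Cons.IH by simp
  also have "\<dots> \<longleftrightarrow> (\<exists>g. sat F R (\<lambda>m. if m \<in> set (n # ns) then g m else a m) \<phi>)"
  proof
    assume "\<exists>u g. sat F R (\<lambda>m. if m \<in> set ns then g m else (a(n := u)) m) \<phi>"
    then obtain u g where "sat F R (\<lambda>m. if m \<in> set ns then g m else (a(n := u)) m) \<phi>"
      by blast
    moreover have "(\<lambda>m. if m \<in> set ns then g m else (a(n := u)) m)
        = (\<lambda>m. if m \<in> set (n # ns) then (if m \<in> set ns then g m else u) else a m)"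
      by auto
    ultimately show "\<exists>g. sat F R (\<lambda>m. if m \<in> set (n # ns) then g m else a m) \<phi>"
      by auto
  next
    assume "\<exists>g. sat F R (\<lambda>m. if m \<in> set (n # ns) then g m else a m) \<phi>"
    then obtain g where "sat F R (\<lambda>m. if m \<in> set (n # ns) then g m else a m) \<phi>"
      by blast
    moreover have "(\<lambda>m. if m \<in> set (n # ns) then g m else a m)
        = (\<lambda>m. if m \<in> set ns then g m else (a(n := g n)) m)"
      by auto
    ultimately show "\<exists>u g. sat F R (\<lambda>m. if m \<in> set ns then g m else (a(n := u)) m) \<phi>"
      by auto
  qed
  finally show ?case .
qed simp

lemma fv_foldr_Ex: "fv (foldr Ex ns \<phi>) = fv \<phi> - set ns"
  by (induction ns) auto

lemma params_foldr_Ex: "params (foldr Ex ns \<phi>) = params \<phi>"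
  by (induction ns) auto

lemma LalgI:
  fixes \<phi> :: "('f, 'r, 'u) fml"
  assumes "params \<phi> \<subseteq> B" "fv \<phi> \<subseteq> V" "D = {a \<in> V \<rightarrow>\<^sub>E UNIV. sat F R a \<phi>}"
  shows "D \<in> Lalg F R V B"
  using assms unfolding Lalg_def by blast

lemma LalgE:
  assumes "D \<in> Lalg F R V B"
  obtains \<phi> :: "('f, 'r, 'u) fml"
  where "params \<phi> \<subseteq> B" "fv \<phi> \<subseteq> V" "D = {a \<in> V \<rightarrow>\<^sub>E UNIV. sat F R a \<phi>}"
  using assms unfolding Lalg_def by blast

lemma Lalg_subset: "D \<in> Lalg F R V B \<Longrightarrow> D \<subseteq> V \<rightarrow>\<^sub>E UNIV"
  by (auto elim: LalgE)

lemma Lalg_mono: "B \<subseteq> B' \<Longrightarrow> Lalg F R V B \<subseteq> Lalg F R V B'"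
  unfolding Lalg_def by blast

lemma Lalg_top: "V \<rightarrow>\<^sub>E UNIV \<in> Lalg F R V B"
  by (rule LalgI[of "Ex 0 (Eq (Var 0) (Var 0))"]) auto

lemma Lalg_Diff_top: "D \<in> Lalg F R V B \<Longrightarrow> (V \<rightarrow>\<^sub>E UNIV) - D \<in> Lalg F R V B"
proof (erule LalgE)
  fix \<phi> :: "('f, 'r, 'u) fml"
  assume "params \<phi> \<subseteq> B" "fv \<phi> \<subseteq> V" "D = {a \<in> V \<rightarrow>\<^sub>E UNIV. sat F R a \<phi>}"
  then show ?thesis by (intro LalgI[of "Neg \<phi>"]) auto
qed

lemma Lalg_Int: "D \<in> Lalg F R V B \<Longrightarrow> E \<in> Lalg F R V B \<Longrightarrow> D \<inter> E \<in> Lalg F R V B"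
proof (erule LalgE, erule LalgE)
  fix \<phi> \<psi> :: "('f, 'r, 'u) fml"
  assume "params \<phi> \<subseteq> B" "fv \<phi> \<subseteq> V" "D = {a \<in> V \<rightarrow>\<^sub>E UNIV. sat F R a \<phi>}"
    and "params \<psi> \<subseteq> B" "fv \<psi> \<subseteq> V" "E = {a \<in> V \<rightarrow>\<^sub>E UNIV. sat F R a \<psi>}"
  then show ?thesis by (intro LalgI[of "Conj \<phi> \<psi>"]) auto
qed

lemma Lalg_Diff:
  assumes "D \<in> Lalg F R V B" "E \<in> Lalg F R V B"
  shows "D - E \<in> Lalg F R V B"
proof -
  have "D \<inter> ((V \<rightarrow>\<^sub>E UNIV) - E) \<in> Lalg F R V B"
    using assms by (simp add: Lalg_Int Lalg_Diff_top)
  moreover have "D \<inter> ((V \<rightarrow>\<^sub>E UNIV) - E) = D - E"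
    using Lalg_subset[OF assms(1)] by auto
  ultimately show ?thesis by simp
qed

lemma Lalg_empty: "{} \<in> Lalg F R V B"
  using Lalg_Diff[OF Lalg_top Lalg_top] by simp

lemma Lalg_Un:
  assumes "D \<in> Lalg F R V B" "E \<in> Lalg F R V B"
  shows "D \<union> E \<in> Lalg F R V B"
proof -
  have "(V \<rightarrow>\<^sub>E UNIV) - (((V \<rightarrow>\<^sub>E UNIV) - D) - E) \<in> Lalg F R V B"
    using assms by (simp add: Lalg_Diff_top Lalg_Diff)
  moreover have "(V \<rightarrow>\<^sub>E UNIV) - (((V \<rightarrow>\<^sub>E UNIV) - D) - E) = D \<union> E"
    using Lalg_subset[OF assms(1)] Lalg_subset[OF assms(2)] by auto
  ultimately show ?thesis by simp
qed

lemma Lalg_UN: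
  "finite I \<Longrightarrow> (\<And>i. i \<in> I \<Longrightarrow> D i \<in> Lalg F R V B) \<Longrightarrow> (\<Union>i\<in>I. D i) \<in> Lalg F R V B"
  by (induction I rule: finite_induct) (simp_all add: Lalg_empty Lalg_Un)

lemma Lalg_cylinder:
  assumes "W \<subseteq> V" "D \<in> Lalg F R W B"
  shows "cylinder V W D \<in> Lalg F R V B"
  using assms(2)
proof (rule LalgE)
  fix \<phi> :: "('f, 'r, 'u) fml"
  assume \<phi>: "params \<phi> \<subseteq> B" "fv \<phi> \<subseteq> W" "D = {a \<in> W \<rightarrow>\<^sub>E UNIV. sat F R a \<phi>}"
  have "sat F R (restrict a W) \<phi> = sat F R a \<phi>" for a
    using \<phi>(2) by (intro sat_cong) auto
  then show ?thesis
    using \<phi> assms(1) unfolding cylinder_def by (intro LalgI[of \<phi>]) auto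
qed

lemma restrict_image_iff_sat_foldr_Ex:
  assumes "fv \<phi> \<subseteq> W" "S \<subseteq> W" "set ns = W - S" "s \<in> S \<rightarrow>\<^sub>E UNIV"
  shows "s \<in> (\<lambda>a. restrict a S) ` {a \<in> W \<rightarrow>\<^sub>E UNIV. sat F R a \<phi>} \<longleftrightarrow> sat F R s (foldr Ex ns \<phi>)"
proof
  assume "s \<in> (\<lambda>a. restrict a S) ` {a \<in> W \<rightarrow>\<^sub>E UNIV. sat F R a \<phi>}"
  then obtain a where a: "sat F R a \<phi>" "s = restrict a S"
    by blast
  have "sat F R (\<lambda>n. if n \<in> set ns then a n else s n) \<phi>"
    using a assms(1,3) by (subst sat_cong[where b = a]) auto
  then show "sat F R s (foldr Ex ns \<phi>)"
    by (auto simp: sat_foldr_Ex)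
next
  assume "sat F R s (foldr Ex ns \<phi>)"
  then obtain g where g: "sat F R (\<lambda>n. if n \<in> set ns then g n else s n) \<phi>"
    by (auto simp: sat_foldr_Ex)
  define a where "a = restrict (\<lambda>n. if n \<in> set ns then g n else s n) W"
  have "sat F R a \<phi>"
    using g assms(1) unfolding a_def by (subst sat_cong) auto
  moreover have "a \<in> W \<rightarrow>\<^sub>E UNIV"
    unfolding a_def by simp
  moreover have "s = restrict a S"
    using assms(2-4) unfolding a_def by (auto simp: fun_eq_iff PiE_def extensional_def)
  ultimately show "s \<in> (\<lambda>a. restrict a S) ` {a \<in> W \<rightarrow>\<^sub>E UNIV. sat F R a \<phi>}"
    by blast
qed

lemma Lalg_restrict_image:
  assumes "finite W" "S \<subseteq> W" "D \<in> Lalg F R W B"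
  shows "(\<lambda>a. restrict a S) ` D \<in> Lalg F R S B"
  using assms(3)
proof (rule LalgE)
  fix \<phi> :: "('f, 'r, 'u) fml"
  assume \<phi>: "params \<phi> \<subseteq> B" "fv \<phi> \<subseteq> W" "D = {a \<in> W \<rightarrow>\<^sub>E UNIV. sat F R a \<phi>}"
  define ns where "ns = sorted_list_of_set (W - S)"
  have set_ns: "set ns = W - S"
    using assms(1) unfolding ns_def by simp
  have "s \<in> (\<lambda>a. restrict a S) ` D \<longleftrightarrow> s \<in> {s \<in> S \<rightarrow>\<^sub>E UNIV. sat F R s (foldr Ex ns \<phi>)}" for s
  proof (cases "s \<in> S \<rightarrow>\<^sub>E UNIV")
    case True
    then show ?thesis
      using restrict_image_iff_sat_foldr_Ex[OF \<phi>(2) assms(2) set_ns True] \<phi>(3) by simp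
  qed auto
  then have "(\<lambda>a. restrict a S) ` D = {s \<in> S \<rightarrow>\<^sub>E UNIV. sat F R s (foldr Ex ns \<phi>)}"
    by blast
  then show ?thesis
    using \<phi>(1,2) set_ns
    by (intro LalgI[of "foldr Ex ns \<phi>"]) (auto simp: params_foldr_Ex fv_foldr_Ex)
qed

lemma Lalg_atom:
  assumes "finite Fs" "Fs \<subseteq> Lalg F R V B"
  shows "atom (V \<rightarrow>\<^sub>E UNIV) Fs T \<in> Lalg F R V B"
  using assms
proof (induction Fs rule: finite_induct)
  case empty
  then show ?case by (simp add: atom_def Lalg_top)
next
  case (insert D Fs)
  then show ?case
    by (simp add: atom_insert Lalg_Int Lalg_Diff_top)
qed

lemma keisler_add:
  "keisler F R V B m \<Longrightarrow> D \<in> Lalg F R V B \<Longrightarrow> E \<in> Lalg F R V B \<Longrightarrow> D \<inter> E = {}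
    \<Longrightarrow> m (D \<union> E) = m D + m E"
  unfolding keisler_def by blast

lemma keisler_nonneg: "keisler F R V B m \<Longrightarrow> 0 \<le> m D"
  unfolding keisler_def by (cases "D \<in> Lalg F R V B") auto

lemma keisler_top: "keisler F R V B m \<Longrightarrow> m (V \<rightarrow>\<^sub>E UNIV) = 1"
  unfolding keisler_def by blast

lemma keisler_outside: "keisler F R V B m \<Longrightarrow> D \<notin> Lalg F R V B \<Longrightarrow> m D = 0"
  unfolding keisler_def by blast

lemma keisler_empty: "keisler F R V B m \<Longrightarrow> m {} = 0"
  using keisler_add[of V B m "{}" "{}"] Lalg_empty[of V B] by simp

lemma keisler_mono:
  assumes "keisler F R V B m" "D \<in> Lalg F R V B" "E \<in> Lalg F R V B" "D \<subseteq> E"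
  shows "m D \<le> m E"
proof -
  have "m E = m D + m (E - D)"
    using keisler_add[OF assms(1,2) Lalg_Diff[OF assms(3,2)]] assms(4)
    by (simp add: Un_Diff_cancel2 sup.absorb2)
  then show ?thesis
    using keisler_nonneg[OF assms(1)] by simp
qed

lemma keisler_sum:
  assumes "keisler F R V B m" "finite I" "\<And>i. i \<in> I \<Longrightarrow> D i \<in> Lalg F R V B"
    "disjoint_family_on D I"
  shows "m (\<Union>i\<in>I. D i) = (\<Sum>i\<in>I. m (D i))"
  using assms(2-4)
proof (induction I rule: finite_induct)
  case empty
  then show ?case using keisler_empty[OF assms(1)] by simp
next
  case (insert i I)
  have "m (D i \<union> (\<Union>j\<in>I. D j)) = m (D i) + m (\<Union>j\<in>I. D j)"
  proof (rule keisler_add[OF assms(1)])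
    show "(\<Union>j\<in>I. D j) \<in> Lalg F R V B"
      using insert by (intro Lalg_UN) auto
    show "D i \<inter> (\<Union>j\<in>I. D j) = {}"
      using insert.prems(2) insert.hyps(2) by (fastforce simp: disjoint_family_on_def)
  qed (use insert in simp)
  with insert show ?case
    by (simp add: disjoint_family_on_insert)
qed

lemma keisler_partition:
  assumes "keisler F R V B m" "finite I" "\<And>i. i \<in> I \<Longrightarrow> P i \<in> Lalg F R V B"
    "disjoint_family_on P I" "(\<Union>i\<in>I. P i) = V \<rightarrow>\<^sub>E UNIV" "D \<in> Lalg F R V B"
  shows "(\<Sum>i\<in>I. m (D \<inter> P i)) = m D"
proof -
  have "m D = m (D \<inter> (\<Union>i\<in>I. P i))"
    using assms(5) Lalg_subset[OF assms(6)] by (simp add: Int_absorb2)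
  also have "\<dots> = m (\<Union>i\<in>I. D \<inter> P i)"
    by (simp only: Int_UN_distrib)
  also have "\<dots> = (\<Sum>i\<in>I. m (D \<inter> P i))"
    using assms(3,4,6)
    by (intro keisler_sum[OF assms(1,2)]) (auto simp: Lalg_Int disjoint_family_on_def)
  finally show ?thesis by simp
qed

lemma keisler_partition_atoms:
  assumes "keisler F R V B m" "finite Fs" "Fs \<subseteq> Lalg F R V B" "D \<in> Lalg F R V B"
  shows "(\<Sum>T\<in>Pow Fs. m (D \<inter> atom (V \<rightarrow>\<^sub>E UNIV) Fs T)) = m D"
  by (rule keisler_partition[OF assms(1)])
    (use assms in \<open>simp_all add: Lalg_atom disjoint_family_on_atom UN_atom\<close>)

lemma keisler_sum_atoms_containing:
  assumes "keisler F R V B m" "finite Fs" "Fs \<subseteq> Lalg F R V B" "D \<in> Fs"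
  shows "(\<Sum>T\<in>Pow Fs. if D \<in> T then m (atom (V \<rightarrow>\<^sub>E UNIV) Fs T) else 0) = m D"
  using keisler_partition_atoms[OF assms(1-3), of D] assms(3,4) keisler_empty[OF assms(1)]
  by (auto simp: Int_atom if_distrib cong: if_cong)

lemma proj_eq_cylinder: "D \<in> Lalg F R W B \<Longrightarrow> proj F R V W B m D = m (cylinder V W D)"
  unfolding proj_def cylinder_def by simp

lemma proj_self: "proj F R V V B m = restr F R V B m"
proof
  fix D
  show "proj F R V V B m D = restr F R V B m D"
    by (cases "D \<in> Lalg F R V B")
      (simp_all add: proj_eq_cylinder cylinder_self Lalg_subset restr_def, simp add: proj_def)
qed

lemma proj_proj:
  assumes "S \<subseteq> W" "B \<subseteq> B'"
  shows "proj F R W S B (proj F R V W B' m) = proj F R V S B m"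
proof
  fix D
  show "proj F R W S B (proj F R V W B' m) D = proj F R V S B m D"
  proof (cases "D \<in> Lalg F R S B")
    case True
    then have "cylinder W S D \<in> Lalg F R W B'"
      using Lalg_cylinder[OF assms(1)] Lalg_mono[OF assms(2)] by blast
    then show ?thesis
      using True by (simp add: proj_eq_cylinder cylinder_cylinder[OF assms(1)])
  qed (simp add: proj_def)
qed

lemma restr_proj: "B \<subseteq> B' \<Longrightarrow> restr F R W B (proj F R V W B' m) = proj F R V W B m"
  using proj_proj[of W W B B' V m] by (simp add: proj_self)

lemma proj_eqI:
  assumes "keisler F R W B \<omega>" "\<And>D. D \<in> Lalg F R W B \<Longrightarrow> m (cylinder V W D) = \<omega> D"
  shows "proj F R V W B m = \<omega>"
  using assms keisler_outside[OF assms(1)] by (auto simp: fun_eq_iff proj_def cylinder_def)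

lemma keisler_proj:
  assumes "keisler F R V B m" "W \<subseteq> V"
  shows "keisler F R W B (proj F R V W B m)"
  unfolding keisler_def
proof (intro conjI allI impI ballI)
  show "proj F R V W B m (W \<rightarrow>\<^sub>E UNIV) = 1"
    using assms by (simp add: proj_eq_cylinder Lalg_top cylinder_top keisler_top)
next
  fix D E
  assume DE: "D \<in> Lalg F R W B" "E \<in> Lalg F R W B" "D \<inter> E = {}"
  have "proj F R V W B m (D \<union> E) = m (cylinder V W D \<union> cylinder V W E)"
    using DE by (simp add: proj_eq_cylinder Lalg_Un cylinder_Un)
  also have "\<dots> = m (cylinder V W D) + m (cylinder V W E)"
    using DE by (intro keisler_add[OF assms(1)] Lalg_cylinder[OF assms(2)]) (auto simp: cylinder_def)
  finally show "proj F R V W B m (D \<union> E) = proj F R V W B m D + proj F R V W B m E"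
    using DE by (simp add: proj_eq_cylinder)
qed (auto simp: proj_def keisler_nonneg[OF assms(1)])

lemma keisler_restr:
  assumes "additive_on (Lalg F R V B) m" "m ` Lalg F R V B \<subseteq> {0..1}" "m (V \<rightarrow>\<^sub>E UNIV) = 1"
  shows "keisler F R V B (restr F R V B m)"
  unfolding keisler_def
proof (intro conjI allI impI ballI)
  show "restr F R V B m (V \<rightarrow>\<^sub>E UNIV) = 1"
    using assms(3) by (simp add: restr_def Lalg_top)
  show "restr F R V B m (D \<union> E) = restr F R V B m D + restr F R V B m E"
    if "D \<in> Lalg F R V B" "E \<in> Lalg F R V B" "D \<inter> E = {}" for D E
    using that assms(1) Lalg_Un[OF that(1,2)] by (simp add: restr_def additive_on_def)
qed (use assms(2) in \<open>auto simp: restr_def\<close>)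

end

section \<open>Amalgamation of Keisler measures\<close>

locale finite_amalgamation =
  fixes F :: "'f \<Rightarrow> 'u list \<Rightarrow> 'u" and R :: "'r \<Rightarrow> 'u list \<Rightarrow> bool"
    and W W' :: "nat set" and P Q :: "'u set"
    and \<omega> \<rho> :: "(nat \<Rightarrow> 'u) set \<Rightarrow> real"
    and F1 F2 :: "(nat \<Rightarrow> 'u) set set"
  assumes finite_W': "finite W'"
    and keisler_\<omega>: "keisler F R W P \<omega>" and keisler_\<rho>: "keisler F R W' Q \<rho>"
    and Q_subset_P: "Q \<subseteq> P"
    and common_marginal: "proj F R W (W \<inter> W') Q \<omega> = proj F R W' (W \<inter> W') Q \<rho>"
    and finite_F1: "finite F1" and F1_subset: "F1 \<subseteq> Lalg F R W P"
    and finite_F2: "finite F2" and F2_subset: "F2 \<subseteq> Lalg F R W' Q"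
begin

abbreviation "S \<equiv> W \<inter> W'"

definition shadows :: "(nat \<Rightarrow> 'u) set set" where
  "shadows = (\<lambda>T2. (\<lambda>b. restrict b S) ` atom (W' \<rightarrow>\<^sub>E UNIV) F2 T2) ` Pow F2"

definition common_type :: "(nat \<Rightarrow> 'u) set set \<Rightarrow> (nat \<Rightarrow> 'u) set" where
  "common_type \<tau> = atom (S \<rightarrow>\<^sub>E UNIV) shadows \<tau>"

definition cell1 :: "(nat \<Rightarrow> 'u) set set \<Rightarrow> (nat \<Rightarrow> 'u) set set \<Rightarrow> (nat \<Rightarrow> 'u) set" where
  "cell1 T1 \<tau> = atom (W \<rightarrow>\<^sub>E UNIV) F1 T1 \<inter> cylinder W S (common_type \<tau>)"

definition cell2 :: "(nat \<Rightarrow> 'u) set set \<Rightarrow> (nat \<Rightarrow> 'u) set set \<Rightarrow> (nat \<Rightarrow> 'u) set" where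
  "cell2 T2 \<tau> = atom (W' \<rightarrow>\<^sub>E UNIV) F2 T2 \<inter> cylinder W' S (common_type \<tau>)"

definition mass :: "(nat \<Rightarrow> 'u) set set \<Rightarrow> real" where
  "mass \<tau> = \<omega> (cylinder W S (common_type \<tau>))"

text \<open>Conditionally on the common type the two cells are coupled independently; when
  \<open>mass \<tau> = 0\<close> both cells are null, so division by zero does no harm.\<close>

definition weight :: "(nat \<Rightarrow> 'u) set set \<Rightarrow> (nat \<Rightarrow> 'u) set set \<Rightarrow> (nat \<Rightarrow> 'u) set set \<Rightarrow> real" where
  "weight T1 \<tau> T2 = \<omega> (cell1 T1 \<tau>) * \<rho> (cell2 T2 \<tau>) / mass \<tau>"

definition point :: "(nat \<Rightarrow> 'u) set set \<Rightarrow> (nat \<Rightarrow> 'u) set set \<Rightarrow> (nat \<Rightarrow> 'u) set set \<Rightarrow> nat \<Rightarrow> 'u" where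
  "point T1 \<tau> T2 = (SOME p. p \<in> (W \<union> W') \<rightarrow>\<^sub>E UNIV
                          \<and> restrict p W \<in> cell1 T1 \<tau> \<and> restrict p W' \<in> cell2 T2 \<tau>)"

definition coupling :: "(nat \<Rightarrow> 'u) set \<Rightarrow> real" where
  "coupling D = (\<Sum>T1\<in>Pow F1. \<Sum>\<tau>\<in>Pow shadows. \<Sum>T2\<in>Pow F2.
                    if point T1 \<tau> T2 \<in> D then weight T1 \<tau> T2 else 0)"

lemma finite_shadows: "finite shadows"
  unfolding shadows_def using finite_F2 by simp

lemma shadows_subset: "shadows \<subseteq> Lalg F R S Q"
  unfolding shadows_def
  using Lalg_restrict_image[OF finite_W' _ Lalg_atom[OF finite_F2 F2_subset]] by blast

lemma Lalg_common_type: "common_type \<tau> \<in> Lalg F R S Q"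
  unfolding common_type_def using finite_shadows shadows_subset by (rule Lalg_atom)

lemma Lalg_cylinder_common_type1: "cylinder W S (common_type \<tau>) \<in> Lalg F R W P"
  using Lalg_cylinder[OF _ Lalg_common_type] Lalg_mono[OF Q_subset_P] by blast

lemma Lalg_cylinder_common_type2: "cylinder W' S (common_type \<tau>) \<in> Lalg F R W' Q"
  using Lalg_cylinder[OF _ Lalg_common_type] by blast

lemma Lalg_cell1: "cell1 T1 \<tau> \<in> Lalg F R W P"
  unfolding cell1_def
  by (intro Lalg_Int Lalg_atom finite_F1 F1_subset Lalg_cylinder_common_type1)

lemma Lalg_cell2: "cell2 T2 \<tau> \<in> Lalg F R W' Q"
  unfolding cell2_def
  by (intro Lalg_Int Lalg_atom finite_F2 F2_subset Lalg_cylinder_common_type2)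

lemma mass_eq: "mass \<tau> = \<rho> (cylinder W' S (common_type \<tau>))"
  using fun_cong[OF common_marginal, of "common_type \<tau>"] Lalg_common_type
  by (simp add: mass_def proj_eq_cylinder)

lemma cylinder_common_types_partition:
  "disjoint_family_on (\<lambda>\<tau>. cylinder V S (common_type \<tau>)) (Pow shadows)"
  "S \<subseteq> V \<Longrightarrow> (\<Union>\<tau>\<in>Pow shadows. cylinder V S (common_type \<tau>)) = V \<rightarrow>\<^sub>E UNIV"
  using disjoint_family_on_atom[of "S \<rightarrow>\<^sub>E UNIV" shadows]
  by (auto simp: disjoint_family_on_def common_type_def cylinder_Int cylinder_UN UN_atom cylinder_top)

lemma sum_cell1_types: "(\<Sum>\<tau>\<in>Pow shadows. \<omega> (cell1 T1 \<tau>)) = \<omega> (atom (W \<rightarrow>\<^sub>E UNIV) F1 T1)"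
  unfolding cell1_def
  using finite_shadows Lalg_cylinder_common_type1 cylinder_common_types_partition
  by (intro keisler_partition[OF keisler_\<omega>] Lalg_atom finite_F1 F1_subset) auto

lemma sum_cell2_types: "(\<Sum>\<tau>\<in>Pow shadows. \<rho> (cell2 T2 \<tau>)) = \<rho> (atom (W' \<rightarrow>\<^sub>E UNIV) F2 T2)"
  unfolding cell2_def
  using finite_shadows Lalg_cylinder_common_type2 cylinder_common_types_partition
  by (intro keisler_partition[OF keisler_\<rho>] Lalg_atom finite_F2 F2_subset) auto

lemma sum_cell1_atoms: "(\<Sum>T1\<in>Pow F1. \<omega> (cell1 T1 \<tau>)) = mass \<tau>"
  using keisler_partition_atoms[OF keisler_\<omega> finite_F1 F1_subset Lalg_cylinder_common_type1]
  by (simp add: cell1_def mass_def Int_commute)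

lemma sum_cell2_atoms: "(\<Sum>T2\<in>Pow F2. \<rho> (cell2 T2 \<tau>)) = mass \<tau>"
  using keisler_partition_atoms[OF keisler_\<rho> finite_F2 F2_subset Lalg_cylinder_common_type2]
  by (simp add: cell2_def mass_eq Int_commute)

lemma cell1_null:
  assumes "mass \<tau> = 0"
  shows "\<omega> (cell1 T1 \<tau>) = 0"
proof -
  have "\<omega> (cell1 T1 \<tau>) \<le> mass \<tau>"
    unfolding mass_def
    by (rule keisler_mono[OF keisler_\<omega> Lalg_cell1 Lalg_cylinder_common_type1]) (auto simp: cell1_def)
  then show ?thesis
    using assms keisler_nonneg[OF keisler_\<omega>, of "cell1 T1 \<tau>"] by simp
qed

lemma cell2_null:
  assumes "mass \<tau> = 0"
  shows "\<rho> (cell2 T2 \<tau>) = 0"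
proof -
  have "\<rho> (cell2 T2 \<tau>) \<le> mass \<tau>"
    unfolding mass_eq
    by (rule keisler_mono[OF keisler_\<rho> Lalg_cell2 Lalg_cylinder_common_type2]) (auto simp: cell2_def)
  then show ?thesis
    using assms keisler_nonneg[OF keisler_\<rho>, of "cell2 T2 \<tau>"] by simp
qed

lemma sum_weight2: "(\<Sum>T2\<in>Pow F2. weight T1 \<tau> T2) = \<omega> (cell1 T1 \<tau>)"
  unfolding weight_def using sum_cell2_atoms cell1_null by (rule sum_mult_div_eq)

lemma sum_weight1: "(\<Sum>T1\<in>Pow F1. weight T1 \<tau> T2) = \<rho> (cell2 T2 \<tau>)"
  unfolding weight_def mult.commute[of "\<omega> _"] using sum_cell1_atoms cell2_null by (rule sum_mult_div_eq)

lemma weight_nonneg: "0 \<le> weight T1 \<tau> T2"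
  unfolding weight_def mass_def
  using keisler_nonneg[OF keisler_\<omega>] keisler_nonneg[OF keisler_\<rho>] by simp

text \<open>A common type meeting the shadow of an \<open>F2\<close>-atom lies inside it, because common
  types are atoms of the shadows; so every point of \<open>cell1 T1 \<tau>\<close> extends into
  \<open>cell2 T2 \<tau>\<close> as soon as the latter is nonempty.\<close>

lemma cells_amalgamate:
  assumes "T2 \<subseteq> F2" "a \<in> cell1 T1 \<tau>" "b \<in> cell2 T2 \<tau>"
  obtains p where "p \<in> (W \<union> W') \<rightarrow>\<^sub>E UNIV" "restrict p W \<in> cell1 T1 \<tau>" "restrict p W' \<in> cell2 T2 \<tau>"
proof -
  let ?shadow = "(\<lambda>b. restrict b S) ` atom (W' \<rightarrow>\<^sub>E UNIV) F2 T2"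
  have shadow: "?shadow \<in> shadows"
    using assms(1) unfolding shadows_def by blast
  have a: "a \<in> W \<rightarrow>\<^sub>E UNIV" "restrict a S \<in> common_type \<tau>"
    using assms(2) by (auto simp: cell1_def mem_cylinder)
  have b: "b \<in> atom (W' \<rightarrow>\<^sub>E UNIV) F2 T2" "restrict b S \<in> common_type \<tau>"
    using assms(3) by (auto simp: cell2_def mem_cylinder)
  have "restrict b S \<in> ?shadow"
    using b(1) by blast
  then have "?shadow \<in> \<tau>"
    using b(2) shadow by (simp add: common_type_def mem_atom)
  then have "restrict a S \<in> ?shadow"
    using a(2) shadow by (simp add: common_type_def mem_atom)
  then obtain b' where b': "b' \<in> atom (W' \<rightarrow>\<^sub>E UNIV) F2 T2" "restrict a S = restrict b' S"
    by blast
  then have "b' \<in> cell2 T2 \<tau>"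
    using a(2) by (auto simp: cell2_def mem_cylinder mem_atom)
  moreover obtain p where "p \<in> (W \<union> W') \<rightarrow>\<^sub>E UNIV" "restrict p W = a" "restrict p W' = b'"
    using restrict_merge[OF a(1) _ b'(2)] b'(1) by (auto simp: mem_atom)
  ultimately show ?thesis
    using assms(2) that by blast
qed

lemma point_in_cells:
  assumes "T2 \<subseteq> F2" "weight T1 \<tau> T2 \<noteq> 0"
  shows "point T1 \<tau> T2 \<in> (W \<union> W') \<rightarrow>\<^sub>E UNIV"
    and "restrict (point T1 \<tau> T2) W \<in> cell1 T1 \<tau>"
    and "restrict (point T1 \<tau> T2) W' \<in> cell2 T2 \<tau>"
proof -
  have "cell1 T1 \<tau> \<noteq> {}" "cell2 T2 \<tau> \<noteq> {}"
    using assms(2) keisler_empty[OF keisler_\<omega>] keisler_empty[OF keisler_\<rho>]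
    by (auto simp: weight_def)
  then obtain p where "p \<in> (W \<union> W') \<rightarrow>\<^sub>E UNIV" "restrict p W \<in> cell1 T1 \<tau>"
      "restrict p W' \<in> cell2 T2 \<tau>"
    using cells_amalgamate[OF assms(1)] by blast
  then have "point T1 \<tau> T2 \<in> (W \<union> W') \<rightarrow>\<^sub>E UNIV \<and> restrict (point T1 \<tau> T2) W \<in> cell1 T1 \<tau>
      \<and> restrict (point T1 \<tau> T2) W' \<in> cell2 T2 \<tau>"
    unfolding point_def by (rule someI[where x = p, OF conjI[OF _ conjI]])
  then show "point T1 \<tau> T2 \<in> (W \<union> W') \<rightarrow>\<^sub>E UNIV"
    and "restrict (point T1 \<tau> T2) W \<in> cell1 T1 \<tau>"
    and "restrict (point T1 \<tau> T2) W' \<in> cell2 T2 \<tau>"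
    by blast+
qed

lemma coupling_cylinder1:
  assumes "D \<in> F1"
  shows "coupling (cylinder (W \<union> W') W D) = \<omega> D"
proof -
  have "(if point T1 \<tau> T2 \<in> cylinder (W \<union> W') W D then weight T1 \<tau> T2 else 0)
      = (if D \<in> T1 then weight T1 \<tau> T2 else 0)" if "T2 \<subseteq> F2" for T1 \<tau> T2
    using point_in_cells[OF that] assms by (cases "weight T1 \<tau> T2 = 0") (auto simp: cell1_def mem_cylinder mem_atom)
  then have "coupling (cylinder (W \<union> W') W D)
      = (\<Sum>T1\<in>Pow F1. \<Sum>\<tau>\<in>Pow shadows. \<Sum>T2\<in>Pow F2. if D \<in> T1 then weight T1 \<tau> T2 else 0)"
    unfolding coupling_def by simp
  also have "\<dots> = (\<Sum>T1\<in>Pow F1. if D \<in> T1 then \<Sum>\<tau>\<in>Pow shadows. \<Sum>T2\<in>Pow F2. weight T1 \<tau> T2 else 0)"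
    unfolding coupling_def by (intro sum.cong refl) simp
  also have "\<dots> = (\<Sum>T1\<in>Pow F1. if D \<in> T1 then \<omega> (atom (W \<rightarrow>\<^sub>E UNIV) F1 T1) else 0)"
    by (simp add: sum_weight2 sum_cell1_types cong: if_cong)
  also have "\<dots> = \<omega> D"
    by (rule keisler_sum_atoms_containing[OF keisler_\<omega> finite_F1 F1_subset assms])
  finally show ?thesis .
qed

lemma coupling_cylinder2:
  assumes "D \<in> F2"
  shows "coupling (cylinder (W \<union> W') W' D) = \<rho> D"
proof -
  have "(if point T1 \<tau> T2 \<in> cylinder (W \<union> W') W' D then weight T1 \<tau> T2 else 0)
      = (if D \<in> T2 then weight T1 \<tau> T2 else 0)" if "T2 \<subseteq> F2" for T1 \<tau> T2
    using point_in_cells[OF that] assms by (cases "weight T1 \<tau> T2 = 0") (auto simp: cell2_def mem_cylinder mem_atom)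
  then have "coupling (cylinder (W \<union> W') W' D)
      = (\<Sum>T1\<in>Pow F1. \<Sum>\<tau>\<in>Pow shadows. \<Sum>T2\<in>Pow F2. if D \<in> T2 then weight T1 \<tau> T2 else 0)"
    unfolding coupling_def by simp
  also have "\<dots> = (\<Sum>T2\<in>Pow F2. if D \<in> T2 then \<Sum>\<tau>\<in>Pow shadows. \<Sum>T1\<in>Pow F1. weight T1 \<tau> T2 else 0)"
    by (subst sum.swap, subst (2) sum.swap, subst sum.swap) (intro sum.cong refl, simp)
  also have "\<dots> = (\<Sum>T2\<in>Pow F2. if D \<in> T2 then \<rho> (atom (W' \<rightarrow>\<^sub>E UNIV) F2 T2) else 0)"
    by (simp add: sum_weight1 sum_cell2_types cong: if_cong)
  also have "\<dots> = \<rho> D"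
    by (rule keisler_sum_atoms_containing[OF keisler_\<rho> finite_F2 F2_subset assms])
  finally show ?thesis .
qed

lemma coupling_additive: "D \<inter> E = {} \<Longrightarrow> coupling (D \<union> E) = coupling D + coupling E"
  unfolding coupling_def by (auto simp: sum.distrib[symmetric] intro!: sum.cong)

lemma coupling_nonneg: "0 \<le> coupling D"
  unfolding coupling_def by (intro sum_nonneg) (simp add: weight_nonneg)

lemma coupling_le_1: "coupling D \<le> 1"
proof -
  have "coupling D \<le> (\<Sum>T1\<in>Pow F1. \<Sum>\<tau>\<in>Pow shadows. \<Sum>T2\<in>Pow F2. weight T1 \<tau> T2)"
    unfolding coupling_def by (intro sum_mono) (simp add: weight_nonneg)
  also have "\<dots> = (\<Sum>T1\<in>Pow F1. \<omega> (atom (W \<rightarrow>\<^sub>E UNIV) F1 T1))"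
    by (simp add: sum_weight2 sum_cell1_types)
  also have "\<dots> = 1"
    using keisler_partition_atoms[OF keisler_\<omega> finite_F1 F1_subset Lalg_top]
    by (simp add: keisler_top[OF keisler_\<omega>] Int_absorb1[OF atom_subset])
  finally show ?thesis .
qed

end

context
  fixes F :: "'f \<Rightarrow> 'u list \<Rightarrow> 'u" and R :: "'r \<Rightarrow> 'u list \<Rightarrow> bool"
begin

lemma keisler_amalgamation_of_set_function:
  assumes "keisler F R W P \<omega>" "keisler F R W' Q \<rho>" "Q \<subseteq> P"
    "additive_on (Lalg F R (W \<union> W') P) m" "m ` Lalg F R (W \<union> W') P \<subseteq> {0..1}"
    "\<And>D. D \<in> Lalg F R W P \<Longrightarrow> m (cylinder (W \<union> W') W D) = \<omega> D"
    "\<And>D. D \<in> Lalg F R W' Q \<Longrightarrow> m (cylinder (W \<union> W') W' D) = \<rho> D"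
  shows "keisler F R (W \<union> W') P (restr F R (W \<union> W') P m)"
    and "proj F R (W \<union> W') W P (restr F R (W \<union> W') P m) = \<omega>"
    and "proj F R (W \<union> W') W' Q (restr F R (W \<union> W') P m) = \<rho>"
proof -
  have "m ((W \<union> W') \<rightarrow>\<^sub>E UNIV) = 1"
    using assms(6)[OF Lalg_top] keisler_top[OF assms(1)] by (simp add: cylinder_top)
  with assms(4,5) show "keisler F R (W \<union> W') P (restr F R (W \<union> W') P m)"
    by (rule keisler_restr)
  show "proj F R (W \<union> W') W P (restr F R (W \<union> W') P m) = \<omega>"
    using assms(6) Lalg_cylinder[of W "W \<union> W'" _ F R P]
    by (intro proj_eqI[OF assms(1)]) (simp add: restr_def)
  show "proj F R (W \<union> W') W' Q (restr F R (W \<union> W') P m) = \<rho>"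
    using assms(7) Lalg_cylinder[of W' "W \<union> W'" _ F R P] Lalg_mono[OF assms(3), of F R W']
    by (intro proj_eqI[OF assms(2)]) (auto simp: restr_def)
qed

theorem keisler_amalgamation:
  assumes "finite W'" "keisler F R W P \<omega>" "keisler F R W' Q \<rho>" "Q \<subseteq> P"
    "proj F R W (W \<inter> W') Q \<omega> = proj F R W' (W \<inter> W') Q \<rho>"
  obtains \<Omega> where "keisler F R (W \<union> W') P \<Omega>"
    "proj F R (W \<union> W') W P \<Omega> = \<omega>" "proj F R (W \<union> W') W' Q \<Omega> = \<rho>"
proof -
  let ?V = "W \<union> W'" and ?L = "Lalg F R (W \<union> W') P"
  let ?c1 = "\<lambda>D. (cylinder ?V W D, \<omega> D)" and ?c2 = "\<lambda>D. (cylinder ?V W' D, \<rho> D)"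
  define C where "C = ?c1 ` Lalg F R W P \<union> ?c2 ` Lalg F R W' Q"
  have cylinder1: "cylinder ?V W D \<in> ?L" if "D \<in> Lalg F R W P" for D
    using that by (intro Lalg_cylinder) auto
  have cylinder2: "cylinder ?V W' D \<in> ?L" if "D \<in> Lalg F R W' Q" for D
    using that Lalg_mono[OF assms(4)] by (intro Lalg_cylinder) auto
  have "fst ` C \<subseteq> ?L"
    unfolding C_def using cylinder1 cylinder2 by auto
  moreover have "\<exists>m. additive_on ?L m \<and> m ` ?L \<subseteq> {0..1} \<and> (\<forall>(D, r)\<in>K. m D = r)"
    if K: "finite K" "K \<subseteq> C" for K
  proof -
    obtain F1 F2 where F1: "finite F1" "F1 \<subseteq> Lalg F R W P" and F2: "finite F2" "F2 \<subseteq> Lalg F R W' Q"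
      and K_subset: "K \<subseteq> ?c1 ` F1 \<union> ?c2 ` F2"
      using K unfolding C_def by (rule finite_subset_image_Un)
    interpret finite_amalgamation F R W W' P Q \<omega> \<rho> F1 F2
      using assms F1 F2 by unfold_locales
    have "coupling D = r" if "(D, r) \<in> K" for D r
    proof -
      from that K_subset consider D' where "D' \<in> F1" "(D, r) = ?c1 D'"
        | D' where "D' \<in> F2" "(D, r) = ?c2 D'"
        by blast
      then show ?thesis
        by cases (simp_all add: coupling_cylinder1 coupling_cylinder2)
    qed
    then show ?thesis
      using coupling_additive coupling_nonneg coupling_le_1
      by (intro exI[of _ coupling]) (auto simp: additive_on_def)
  qed
  ultimately obtain m where m: "additive_on ?L m" "m ` ?L \<subseteq> {0..1}" "\<forall>(D, r)\<in>C. m D = r"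
    by (rule finitely_additive_compactness)
  have "m (cylinder ?V W D) = \<omega> D" if "D \<in> Lalg F R W P" for D
    using bspec[OF m(3), of "?c1 D"] that by (simp add: C_def)
  moreover have "m (cylinder ?V W' D) = \<rho> D" if "D \<in> Lalg F R W' Q" for D
    using bspec[OF m(3), of "?c2 D"] that by (simp add: C_def)
  ultimately show thesis
    using keisler_amalgamation_of_set_function[OF assms(2-4) m(1,2)] that by blast
qed

definition geE_witness ::
  "'u set \<Rightarrow> nat set \<Rightarrow> nat set \<Rightarrow> ((nat \<Rightarrow> 'u) set \<Rightarrow> real) \<Rightarrow> ((nat \<Rightarrow> 'u) set \<Rightarrow> real)
    \<Rightarrow> ((nat \<Rightarrow> 'u) set \<Rightarrow> real) \<Rightarrow> bool" where
  "geE_witness A X Y \<mu> \<nu> lam \<longleftrightarrow>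
     keisler F R (X \<union> Y) A lam \<and> proj F R (X \<union> Y) X A lam = restr F R X A \<mu>
     \<and> (\<forall>\<omega>. keisler F R (X \<union> Y) UNIV \<omega> \<and> restr F R (X \<union> Y) A \<omega> = lam
            \<and> proj F R (X \<union> Y) X UNIV \<omega> = \<mu> \<longrightarrow> proj F R (X \<union> Y) Y UNIV \<omega> = \<nu>)"

lemma geE_iff_witness: "geE F R A X Y \<mu> \<nu> \<longleftrightarrow> (\<exists>lam. geE_witness A X Y \<mu> \<nu> lam)"
  unfolding geE_def geE_witness_def ..

lemma geE_witness_extension:
  assumes "geE_witness A X Y \<mu> \<nu> lam" "keisler F R V UNIV \<Omega>" "X \<union> Y \<subseteq> V"
    "proj F R V (X \<union> Y) A \<Omega> = lam" "proj F R V X UNIV \<Omega> = \<mu>"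
  shows "proj F R V Y UNIV \<Omega> = \<nu>"
proof -
  let ?\<omega> = "proj F R V (X \<union> Y) UNIV \<Omega>"
  have "keisler F R (X \<union> Y) UNIV ?\<omega>"
    using keisler_proj[OF assms(2,3)] .
  moreover have "restr F R (X \<union> Y) A ?\<omega> = lam"
    using assms(4) by (simp add: restr_proj)
  moreover have "proj F R (X \<union> Y) X UNIV ?\<omega> = \<mu>"
    using assms(5) by (simp add: proj_proj)
  ultimately have "proj F R (X \<union> Y) Y UNIV ?\<omega> = \<nu>"
    using assms(1) unfolding geE_witness_def by blast
  then show ?thesis
    by (simp add: proj_proj)
qed

text \<open>Amalgamating \<open>\<mu>\<close> with the witness shows that its \<open>Y\<close>-marginal is
  already determined.\<close>

lemma geE_witness_marginal:
  assumes "geE_witness A X Y \<mu> \<nu> lam" "finite X" "finite Y" "keisler F R X UNIV \<mu>"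
  shows "proj F R (X \<union> Y) Y A lam = restr F R Y A \<nu>"
proof -
  have witness: "keisler F R (X \<union> Y) A lam" "proj F R (X \<union> Y) X A lam = restr F R X A \<mu>"
    using assms(1) unfolding geE_witness_def by blast+
  have "proj F R X (X \<inter> (X \<union> Y)) A \<mu> = proj F R (X \<union> Y) (X \<inter> (X \<union> Y)) A lam"
    using witness(2) by (simp add: proj_self)
  then obtain \<Omega> where \<Omega>: "keisler F R (X \<union> Y) UNIV \<Omega>"
    "proj F R (X \<union> Y) X UNIV \<Omega> = \<mu>" "proj F R (X \<union> Y) (X \<union> Y) A \<Omega> = lam"
    using keisler_amalgamation[OF _ assms(4) witness(1)] assms(2,3) by auto
  have "proj F R (X \<union> Y) Y A lam = proj F R (X \<union> Y) Y A \<Omega>"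
    using \<Omega>(3) by (auto simp: proj_proj)
  also have "\<dots> = restr F R Y A (proj F R (X \<union> Y) Y UNIV \<Omega>)"
    by (simp add: restr_proj)
  also have "proj F R (X \<union> Y) Y UNIV \<Omega> = \<nu>"
    using \<Omega> by (intro geE_witness_extension[OF assms(1)]) auto
  finally show ?thesis .
qed

lemma geE_witness_glue:
  assumes "geE_witness A X Y \<mu> \<nu> lam1" "geE_witness A Y Z \<nu> \<eta> lam2" "finite V" "X \<union> Y \<union> Z = V"
    "keisler F R V A \<Lambda>" "proj F R V (X \<union> Y) A \<Lambda> = lam1" "proj F R V (Y \<union> Z) A \<Lambda> = lam2"
  shows "geE_witness A X Z \<mu> \<eta> (proj F R V (X \<union> Z) A \<Lambda>)"
  unfolding geE_witness_def
proof (intro conjI allI impI)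
  show "keisler F R (X \<union> Z) A (proj F R V (X \<union> Z) A \<Lambda>)"
    using assms(4,5) by (intro keisler_proj) auto
  have "proj F R (X \<union> Z) X A (proj F R V (X \<union> Z) A \<Lambda>) = proj F R (X \<union> Y) X A lam1"
    using assms(6) by (auto simp: proj_proj)
  then show "proj F R (X \<union> Z) X A (proj F R V (X \<union> Z) A \<Lambda>) = restr F R X A \<mu>"
    using assms(1) unfolding geE_witness_def by simp
  fix \<omega>
  assume \<omega>: "keisler F R (X \<union> Z) UNIV \<omega> \<and> restr F R (X \<union> Z) A \<omega> = proj F R V (X \<union> Z) A \<Lambda>
    \<and> proj F R (X \<union> Z) X UNIV \<omega> = \<mu>"
  have "(X \<union> Z) \<union> V = V" "(X \<union> Z) \<inter> V = X \<union> Z"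
    using assms(4) by auto
  moreover have "proj F R (X \<union> Z) (X \<union> Z) A \<omega> = proj F R V (X \<union> Z) A \<Lambda>"
    using \<omega> by (simp add: proj_self)
  ultimately obtain \<Omega> where \<Omega>: "keisler F R V UNIV \<Omega>"
    "proj F R V (X \<union> Z) UNIV \<Omega> = \<omega>" "proj F R V V A \<Omega> = \<Lambda>"
    using keisler_amalgamation[of V "X \<union> Z" UNIV \<omega> A \<Lambda>] \<omega> assms(3,5) by auto
  have \<Omega>_A: "proj F R V W A \<Omega> = proj F R V W A \<Lambda>" if "W \<subseteq> V" for W
    using \<Omega>(3) that by (auto simp: proj_proj)
  have "proj F R V X UNIV \<Omega> = \<mu>"
    using \<Omega>(2) \<omega> by (auto simp: proj_proj)
  then have "proj F R V Y UNIV \<Omega> = \<nu>"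
    using geE_witness_extension[OF assms(1) \<Omega>(1)] assms(4,6) \<Omega>_A by auto
  then have "proj F R V Z UNIV \<Omega> = \<eta>"
    using geE_witness_extension[OF assms(2) \<Omega>(1)] assms(4,7) \<Omega>_A by auto
  then show "proj F R (X \<union> Z) Z UNIV \<omega> = \<eta>"
    using \<Omega>(2) by (auto simp: proj_proj)
qed

end

theorem proposition3p12:
  fixes F :: "'f \<Rightarrow> 'u list \<Rightarrow> 'u" and R :: "'r \<Rightarrow> 'u list \<Rightarrow> bool"
    and \<kappa> :: "'k rel" and A :: "'u set" and X Y Z :: "nat set"
    and \<mu> \<nu> \<eta> :: "(nat \<Rightarrow> 'u) set \<Rightarrow> real"
  assumes "monster F R \<kappa>" and "ordLess2 (card_of A) \<kappa>"
    and "finite X" and "finite Y" and "finite Z"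
    and "X \<inter> Y = {}" and "Y \<inter> Z = {}" and "X \<inter> Z = {}"
    and "keisler F R X UNIV \<mu>" and "keisler F R Y UNIV \<nu>" and "keisler F R Z UNIV \<eta>"
    and "geE F R A X Y \<mu> \<nu>" and "geE F R A Y Z \<nu> \<eta>"
  shows "geE F R A X Z \<mu> \<eta>"
proof -
  obtain lam1 lam2 where lam1: "geE_witness F R A X Y \<mu> \<nu> lam1"
    and lam2: "geE_witness F R A Y Z \<nu> \<eta> lam2"
    using assms(12,13) by (auto simp: geE_iff_witness)
  have "(X \<union> Y) \<inter> (Y \<union> Z) = Y" "(X \<union> Y) \<union> (Y \<union> Z) = X \<union> Y \<union> Z"
    using assms(8) by auto
  moreover have "proj F R (X \<union> Y) Y A lam1 = proj F R (Y \<union> Z) Y A lam2"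
    using geE_witness_marginal[OF lam1 assms(3,4,9)] lam2 by (simp add: geE_witness_def)
  ultimately obtain \<Lambda> where "keisler F R (X \<union> Y \<union> Z) A \<Lambda>"
    "proj F R (X \<union> Y \<union> Z) (X \<union> Y) A \<Lambda> = lam1" "proj F R (X \<union> Y \<union> Z) (Y \<union> Z) A \<Lambda> = lam2"
    using keisler_amalgamation[of "Y \<union> Z" F R "X \<union> Y" A lam1 A lam2] lam1 lam2 assms(4,5)
    by (auto simp: geE_witness_def)
  then have "geE_witness F R A X Z \<mu> \<eta> (proj F R (X \<union> Y \<union> Z) (X \<union> Z) A \<Lambda>)"
    using assms(3-5) by (intro geE_witness_glue[OF lam1 lam2]) auto
  then show ?thesis
    by (auto simp: geE_iff_witness)
qed

end
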